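(* Let $p,q$ be primes and let $G$ be a non-abelian group of order $pq$. Then $G$ is a metacyclic group with trivial centre, and its right and left commutation semigroups $\mathrm{P}(G)$ and $\Lambda(G)$ are complete (with respect to a presentation of $G$ as $G(m,n,k)$).
   Context: For positive integers $m,n,k$ with $(m,k-1)=1$ and $n=\mathrm{ind}_m(k)$ (the least $d\ge1$ with $k^d\equiv1\pmod m$), $G(m,n,k)=\langle a,b;\ a^m=1,\ b^n=1,\ b^{-1}ab=a^k\rangle$; elements are written uniquely as $a^ib^j$, $i\in\mathbb{Z}_m$, $j\in\mathbb{Z}_n$, and $k_t=k^t-1\pmod m$. Commutators are $[x,y]=x^{-1}y^{-1}xy$; $(x)\rho(g)=[x,g]$, $(x)\lambda(g)=[g,x]$; maps are written on the right and composed left to right; $\mathrm{P}(G)$, $\Lambda(G)$ are the semigroups generated by all $\rho(g)$, resp. all $\lambda(g)$. With $R=\{k_j:j\in\mathbb{Z}_n\}$, $L=\{-k_j:j\in\mathbb{Z}_n\}$ one has $\mathrm{P}(G)=\Sigma_G(R)$, $\Lambda(G)=\Sigma_G(L)$, and completeness of $\mathrm{P}(G)$, $\Lambda(G)$ means completeness of $\Sigma_G(R)$, $\Sigma_G(L)$. Here: $(a^ib^j)\mu(x,y)=a^{xik^j-yk_j}$, $C(x,y)=\{\mu(x,yz):z\in\mathbb{Z}_m\}$; $S^*$ is the multiplicative subsemigroup of $\mathbb{Z}_m$ generated by $S$; $\Sigma_G(S)$ is the semigroup generated by $\{\mu(s,z):s\in S,z\in\mathbb{Z}_m\}$; for $x\in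 S^*$, $Y(x)=\{s^*z: s^*\in S^*, z\in\mathbb{Z}_m, \exists s\in S,\ x\equiv ss^*\}$; the $x$-family $\{C(x,y):y\in Y(x)\}$ is complete if it contains $C(x,1)$; $\Sigma_G(S)$ is complete if all $x$-families ($x\in S^*$) are complete. *)

theory Defs
  imports "HOL-Algebra.Algebra" "HOL-Number_Theory.Number_Theory"
begin

definition centre :: "('a, 'b) monoid_scheme \<Rightarrow> 'a set" where
  "centre G = {z \<in> carrier G. \<forall>g \<in> carrier G. z \<otimes>\<^bsub>G\<^esub> g = g \<otimes>\<^bsub>G\<^esub> z}"

definition metacyclic :: "('a, 'b) monoid_scheme \<Rightarrow> bool" where
  "metacyclic G \<longleftrightarrow> (\<exists>N. N \<lhd> G \<and> cyclic_group (G\<lparr>carrier := N\<rparr>) \<and> cyclic_group (G Mod N))"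

text \<open>The element a^i b^j (i in Z_m, j in Z_n) is represented by the pair (i,j) with
  0 <= i < m, 0 <= j < n.  From b^{-1} a b = a^k we get b^j a^s = a^{s k^{n-j}} b^j
  (as k^n = 1 mod m), hence the multiplication below.\<close>
definition Gmnk :: "nat \<Rightarrow> nat \<Rightarrow> nat \<Rightarrow> (int \<times> int) monoid" where
  "Gmnk m n k = \<lparr> carrier = {0..<int m} \<times> {0..<int n},
     monoid.mult = (\<lambda>(i, j) (s, t). ((i + s * int k ^ nat (int n - j)) mod int m, (j + t) mod int n)),
     monoid.one = (0, 0) \<rparr>"

definition Gmnk_params :: "nat \<Rightarrow> nat \<Rightarrow> nat \<Rightarrow> bool" where
  "Gmnk_params m n k \<longleftrightarrow> 0 < m \<and> 0 < n \<and> 0 < k \<and> coprime m (k - 1) \<and> n = ord m k"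

definition kk :: "nat \<Rightarrow> nat \<Rightarrow> int \<Rightarrow> int" where
  "kk m k t = (int k ^ nat t - 1) mod int m"

definition mu :: "nat \<Rightarrow> nat \<Rightarrow> nat \<Rightarrow> int \<Rightarrow> int \<Rightarrow> (int \<times> int \<Rightarrow> int \<times> int)" where
  "mu m n k x y = (\<lambda>(i, j) \<in> carrier (Gmnk m n k).
      ((x * i * int k ^ nat j - y * kk m k j) mod int m, 0))"

definition Cfam :: "nat \<Rightarrow> nat \<Rightarrow> nat \<Rightarrow> int \<Rightarrow> int \<Rightarrow> (int \<times> int \<Rightarrow> int \<times> int) set" where
  "Cfam m n k x y = {mu m n k x ((y * z) mod int m) | z. z \<in> {0..<int m}}"

definition starS :: "nat \<Rightarrow> int set \<Rightarrow> int set" where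
  "starS m S = {prod_list xs mod int m | xs. xs \<noteq> [] \<and> set xs \<subseteq> S}"

definition Yset :: "nat \<Rightarrow> int set \<Rightarrow> int \<Rightarrow> int set" where
  "Yset m S x = {(s' * z) mod int m | s' z. s' \<in> starS m S \<and> z \<in> {0..<int m} \<and>
                   (\<exists>s \<in> S. [x = s * s'] (mod int m))}"

definition Sigma_complete :: "nat \<Rightarrow> nat \<Rightarrow> nat \<Rightarrow> int set \<Rightarrow> bool" where
  "Sigma_complete m n k S \<longleftrightarrow>
     (\<forall>x \<in> starS m S. \<exists>y \<in> Yset m S x. Cfam m n k x y = Cfam m n k x 1)"

definition Rset :: "nat \<Rightarrow> nat \<Rightarrow> nat \<Rightarrow> int set" where
  "Rset m n k = {kk m k j | j. j \<in> {0..<int n}}"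

definition Lset :: "nat \<Rightarrow> nat \<Rightarrow> nat \<Rightarrow> int set" where
  "Lset m n k = {(- kk m k j) mod int m | j. j \<in> {0..<int n}}"

end

theory Submission
  imports Defs
begin

text \<open>
  Groups of order \<open>p\<^sup>2\<close> are abelian, because a \<open>p\<close>-group acting on itself by conjugation
  has as many fixed points (central elements) as elements modulo \<open>p\<close>.  So \<open>p \<noteq> q\<close>, say
  \<open>q < p\<close>.  An element \<open>a\<close> of order \<open>p\<close> generates a normal subgroup \<open>A\<close>: a different
  conjugate of \<open>A\<close> would meet \<open>A\<close> trivially, giving \<open>p\<^sup>2 > pq\<close> products.  Hence
  \<open>A\<close> and the cyclic quotient of order \<open>q\<close> make \<open>G\<close> metacyclic, and for \<open>b\<close> of order \<open>q\<close>
  we get \<open>b\<^sup>-\<^sup>1 a b = a\<^sup>k\<close>, so that \<open>(i, j) \<mapsto> a\<^sup>i b\<^sup>j\<close> is an isomorphism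
  \<open>G(p, q, k) \<rightarrow> G\<close>.  Since \<open>a\<close> and \<open>b\<close> do not commute, \<open>k \<noteq> 1\<close> and \<open>k\<close> has order \<open>q\<close>
  modulo \<open>p\<close>.  Commuting elements of orders \<open>p\<close> and \<open>q\<close> would be central and force
  \<open>G\<close> to be abelian; as a non-trivial central element has a power of prime order, the
  centre is trivial.  Completeness is arithmetic modulo the prime \<open>p\<close>: \<open>R\<close> and \<open>L\<close>
  contain \<open>0\<close> and the unit \<open>\<plusminus>(k - 1)\<close>, and by Fermat every \<open>x \<in> S\<^sup>*\<close> is \<open>s s'\<close> with \<open>s \<in> S\<close>
  and \<open>s'\<close> a unit in \<open>S\<^sup>*\<close>, so \<open>C(x, s') = C(x, 1)\<close>.
\<close>

\<comment> \<open>HOL-Algebra's \<open>Divisibility.prime\<close> would otherwise hide the number-theoretic \<open>prime\<close>.\<close>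
hide_const (open) Divisibility.prime

section \<open>Completeness modulo a prime\<close>

lemma fermat_theorem_int:
  assumes "prime p" and "coprime c (int p)"
  shows "[c ^ (p - 1) = 1] (mod int p)"
proof -
  have "residues (int p)" using assms(1) prime_gt_1_nat by (simp add: residues_def)
  then show ?thesis using residues.euler_theorem[of "int p" c] assms by (simp add: totient_prime)
qed

lemma starS_unit_factor:
  assumes p: "prime p" and x: "x \<in> starS p S" and x_unit: "coprime x (int p)"
  shows "\<exists>s\<in>S. \<exists>s'\<in>starS p S. [x = s * s'] (mod int p) \<and> coprime s' (int p)"
proof -
  obtain c cs where x_eq: "x = (c * prod_list cs) mod int p" and S: "c \<in> S" "set cs \<subseteq> S"
    using x by (auto simp: starS_def neq_Nil_conv)
  have p_pos: "int p \<noteq> 0" using p by auto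
  have c_unit: "coprime c (int p)"
    using x_unit by (simp add: x_eq coprime_mod_left_iff[OF p_pos])
  define s' where "s' = prod_list (cs @ replicate (p - 1) c) mod int p"
  have "cs @ replicate (p - 1) c \<noteq> []" "set (cs @ replicate (p - 1) c) \<subseteq> S"
    using S prime_ge_2_nat[OF p] by auto
  then have "s' \<in> starS p S"
    unfolding starS_def s'_def by blast
  moreover have "[x = c * s'] (mod int p)"
  proof -
    have "[c * s' = (c * prod_list cs) * c ^ (p - 1)] (mod int p)"
      unfolding s'_def cong_def by (simp add: mod_mult_right_eq prod_list_replicate ac_simps)
    also have "[(c * prod_list cs) * c ^ (p - 1) = (c * prod_list cs) * 1] (mod int p)"
      by (intro cong_mult cong_refl fermat_theorem_int p c_unit)
    finally show ?thesis by (simp add: x_eq cong_def)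
  qed
  moreover have "coprime s' (int p)"
    using cong_imp_coprime[OF \<open>[x = c * s'] (mod int p)\<close> x_unit] by simp
  ultimately show ?thesis using S by blast
qed

lemma Cfam_eq_if_coprime:
  assumes "coprime y (int m)"
  shows "Cfam m n k x y = Cfam m n k x 1"
proof -
  obtain u where u: "[y * u = 1] (mod int m)"
    using assms cong_solve_coprime_int by blast
  have Cfam_image: "Cfam m n k x y' = mu m n k x ` (\<lambda>z. (y' * z) mod int m) ` {0..<int m}" for y'
    unfolding Cfam_def by blast
  have "(\<lambda>z. (y * z) mod int m) ` {0..<int m} = {0..<int m}"
  proof
    show "(\<lambda>z. (y * z) mod int m) ` {0..<int m} \<subseteq> {0..<int m}" by auto
    show "{0..<int m} \<subseteq> (\<lambda>z. (y * z) mod int m) ` {0..<int m}"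
    proof
      fix w assume w: "w \<in> {0..<int m}"
      have "[y * (u * w) = 1 * w] (mod int m)"
        using cong_mult[OF u cong_refl, of w] by (simp add: mult.assoc)
      then have "(y * ((u * w) mod int m)) mod int m = w"
        using w by (simp add: cong_def mod_mult_right_eq)
      moreover have "(u * w) mod int m \<in> {0..<int m}" using w by simp
      ultimately show "w \<in> (\<lambda>z. (y * z) mod int m) ` {0..<int m}" by (metis image_eqI)
    qed
  qed
  moreover have "(\<lambda>z. (1 * z) mod int m) ` {0..<int m} = {0..<int m}" by auto
  ultimately show ?thesis by (simp only: Cfam_image)
qed

lemma Sigma_complete_if_prime:
  assumes p: "prime p" and "0 \<in> S" and b: "b \<in> S" "coprime b (int p)"
  shows "Sigma_complete p n k S"
  unfolding Sigma_complete_def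
proof
  fix x assume x: "x \<in> starS p S"
  have p_pos: "int p \<noteq> 0" using p by auto
  obtain s s' where s: "s \<in> S" "s' \<in> starS p S" "[x = s * s'] (mod int p)" "coprime s' (int p)"
  proof (cases "coprime x (int p)")
    case True
    then show ?thesis using starS_unit_factor[OF p x] that by blast
  next
    case False
    then have "int p dvd x"
      using p prime_imp_coprime[of "int p" x] by (auto simp: prime_nat_int_transfer coprime_commute)
    then have "[x = 0 * b] (mod int p)"
      by (simp add: cong_def dvd_eq_mod_eq_0)
    moreover have "b mod int p \<in> starS p S"
      unfolding starS_def using b by (auto intro!: exI[of _ "[b]"])
    ultimately show ?thesis
      using that[of 0 "b mod int p"] \<open>0 \<in> S\<close> b(2)
      by (simp add: cong_def coprime_mod_left_iff[OF p_pos])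
  qed
  have "1 < int p" using prime_gt_1_nat[OF p] by simp
  then have "(s' * 1) mod int p \<in> Yset p S x"
    unfolding Yset_def mem_Collect_eq using s(1-3)
    by (rule_tac exI[of _ s'], rule_tac exI[of _ 1]) auto
  moreover have "coprime ((s' * 1) mod int p) (int p)"
    using s(4) by (simp add: coprime_mod_left_iff[OF p_pos])
  ultimately show "\<exists>y\<in>Yset p S x. Cfam p n k x y = Cfam p n k x 1"
    using Cfam_eq_if_coprime by blast
qed

lemma Gmnk_params_if_prime:
  assumes p: "prime p" and q: "prime q" and k: "k < p" "k \<noteq> 1" and k_pow: "[k ^ q = 1] (mod p)"
  shows "Gmnk_params p q k"
proof -
  have "k \<noteq> 0"
  proof
    assume "k = 0"
    then have "[0 = 1] (mod p)" using k_pow prime_gt_0_nat[OF q] by (simp add: zero_power)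
    then show False using prime_gt_1_nat[OF p] by (simp add: cong_def)
  qed
  then have "\<not> p dvd k - 1" using k by (auto dest: dvd_imp_le)
  then have "coprime p (k - 1)" using p prime_imp_coprime by blast
  have "ord p k \<noteq> 1"
  proof
    assume "ord p k = 1"
    then have "[k = 1] (mod p)" using ord_works[of k p] by simp
    then show False using k prime_gt_1_nat[OF p] by (simp add: cong_def)
  qed
  moreover have "ord p k dvd q" using k_pow ord_divides by blast
  ultimately have "q = ord p k" using q prime_nat_iff by auto
  then show ?thesis
    unfolding Gmnk_params_def
    using \<open>k \<noteq> 0\<close> \<open>coprime p (k - 1)\<close> prime_gt_0_nat[OF p] prime_gt_0_nat[OF q] by simp
qed

lemma one_less_index_if_Gmnk_params:
  assumes params: "Gmnk_params m n k" and m: "prime m"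
  shows "1 < n"
proof (rule ccontr)
  assume "\<not> 1 < n"
  then have "ord m k = 1" using params by (simp add: Gmnk_params_def)
  then have "[k = 1] (mod m)" using ord_works[of k m] by simp
  then have "m dvd k - 1" using params by (simp add: Gmnk_params_def cong_altdef_nat)
  moreover have "coprime m (k - 1)" using params by (simp add: Gmnk_params_def)
  ultimately have "is_unit m" using coprime_absorb_left by blast
  then show False using m by simp
qed

lemma coprime_kk_1_if_Gmnk_params:
  assumes "Gmnk_params m n k"
  shows "coprime (kk m k 1) (int m)"
proof -
  have "coprime m (k - 1)" "0 < k" "int m \<noteq> 0" using assms by (simp_all add: Gmnk_params_def)
  then have "coprime (int (k - 1)) (int m)"
    by (simp only: coprime_int_iff coprime_commute[of "k - 1"])
  moreover have "kk m k 1 = int (k - 1) mod int m" using \<open>0 < k\<close> by (simp add: kk_def of_nat_diff)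
  ultimately show ?thesis by (simp only: coprime_mod_left_iff[OF \<open>int m \<noteq> 0\<close>])
qed

lemma Sigma_complete_Rset:
  assumes params: "Gmnk_params m n k" and m: "prime m"
  shows "Sigma_complete m n k (Rset m n k)"
proof (rule Sigma_complete_if_prime[OF m])
  have "1 < n" using one_less_index_if_Gmnk_params[OF params m] .
  then show "kk m k 1 \<in> Rset m n k"
    unfolding Rset_def by (rule_tac CollectI, rule_tac exI[of _ 1]) simp
  show "0 \<in> Rset m n k"
    unfolding Rset_def using \<open>1 < n\<close> by (rule_tac CollectI, rule_tac exI[of _ 0]) (simp add: kk_def)
  show "coprime (kk m k 1) (int m)" using coprime_kk_1_if_Gmnk_params[OF params] .
qed

lemma Sigma_complete_Lset:
  assumes params: "Gmnk_params m n k" and m: "prime m"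
  shows "Sigma_complete m n k (Lset m n k)"
proof (rule Sigma_complete_if_prime[OF m])
  have "1 < n" using one_less_index_if_Gmnk_params[OF params m] .
  then show "(- kk m k 1) mod int m \<in> Lset m n k"
    unfolding Lset_def by (rule_tac CollectI, rule_tac exI[of _ 1]) simp
  show "0 \<in> Lset m n k"
    unfolding Lset_def using \<open>1 < n\<close> by (rule_tac CollectI, rule_tac exI[of _ 0]) (simp add: kk_def)
  have "int m \<noteq> 0" using m by simp
  then show "coprime ((- kk m k 1) mod int m) (int m)"
    using coprime_kk_1_if_Gmnk_params[OF params] by (simp add: coprime_mod_left_iff)
qed

section \<open>Subgroups, centralizers and the centre\<close>

definition centralizer :: "('a, 'b) monoid_scheme \<Rightarrow> 'a \<Rightarrow> 'a set" where
  "centralizer G x = {g \<in> carrier G. x \<otimes>\<^bsub>G\<^esub> g = g \<otimes>\<^bsub>G\<^esub> x}"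

context group
begin

lemma conjugate_eq_iff_commute:
  assumes "g \<in> carrier G" "x \<in> carrier G"
  shows "g \<otimes> x \<otimes> inv g = x \<longleftrightarrow> x \<otimes> g = g \<otimes> x"
proof -
  have "g \<otimes> x \<otimes> inv g = x \<longleftrightarrow> x = g \<otimes> x \<otimes> inv g" by (rule eq_commute)
  also have "\<dots> \<longleftrightarrow> g \<otimes> x = x \<otimes> g" using assms by (intro inv_solve_right) simp_all
  also have "\<dots> \<longleftrightarrow> x \<otimes> g = g \<otimes> x" by (rule eq_commute)
  finally show ?thesis .
qed

lemma conjugation_hom: "g \<in> carrier G \<Longrightarrow> (\<lambda>h. g \<otimes> h \<otimes> inv g) \<in> hom G G"
  by (rule homI) (simp_all add: m_assoc inv_solve_left)

lemma subgroup_centralizer: "x \<in> carrier G \<Longrightarrow> subgroup (centralizer G x) G"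
proof -
  assume x: "x \<in> carrier G"
  have "(\<lambda>h \<in> carrier G. g \<otimes> h \<otimes> inv g) x = x \<longleftrightarrow> x \<otimes> g = g \<otimes> x" if "g \<in> carrier G" for g
    using x that conjugate_eq_iff_commute by simp
  then have "stabilizer G (\<lambda>g. \<lambda>h \<in> carrier G. g \<otimes> h \<otimes> inv g) x = centralizer G x"
    unfolding stabilizer_def centralizer_def by blast
  then show ?thesis
    using group_action.stabilizer_subgroup[OF action_by_conjugation x] by simp
qed

lemma centre_eq_Inter_centralizer: "centre G = (\<Inter>x\<in>carrier G. centralizer G x)"
  by (auto simp: centre_def centralizer_def)

lemma subgroup_centre: "subgroup (centre G) G"
  unfolding centre_eq_Inter_centralizer
  by (rule subgroups_Inter) (auto simp: subgroup_centralizer)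

lemma mem_centre_iff_centralizer: "x \<in> centre G \<longleftrightarrow> x \<in> carrier G \<and> centralizer G x = carrier G"
  unfolding centre_def centralizer_def by blast

lemma comm_group_if_centre_eq_carrier: "centre G = carrier G \<Longrightarrow> comm_group G"
  by (rule group_comm_groupI) (auto simp: centre_def)

lemma card_subgroup_dvd:
  assumes H: "subgroup H G" and K: "subgroup K G" "K \<subseteq> H"
  shows "card K dvd card H"
proof -
  interpret H: group "G\<lparr>carrier := H\<rparr>"
    using subgroup_imp_group[OF H] .
  have "subgroup K (G\<lparr>carrier := H\<rparr>)"
    using subgroup_incl[OF K(1) H K(2)] .
  then have "card (rcosets\<^bsub>G\<lparr>carrier := H\<rparr>\<^esub> K) * card K = card H"
    using H.lagrange by (simp add: order_def)
  then show ?thesis by (metis dvd_triv_right)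
qed

lemma card_subgroup_dvd_order: "subgroup H G \<Longrightarrow> card H dvd order G"
  by (metis lagrange dvd_triv_right)

lemma subgroup_eq_carrier_if_card:
  assumes "finite (carrier G)" "subgroup H G" "card H = order G"
  shows "H = carrier G"
  using assms card_subset_eq[OF assms(1) subgroup.subset[OF assms(2)]] by (simp add: order_def)

lemma ord_dvd_card_subgroup:
  assumes H: "subgroup H G" and x: "x \<in> H"
  shows "ord x dvd card H"
proof -
  have "x \<in> carrier G" using subgroup.mem_carrier[OF H x] .
  moreover have "generate G {x} \<subseteq> H"
    using generate_subgroup_incl[OF _ H] x by blast
  ultimately show ?thesis
    using card_subgroup_dvd[OF H generate_is_subgroup] generate_pow_card by auto
qed

lemma ord_eq_prime_if_dvd:
  assumes "x \<in> carrier G" "x \<noteq> \<one>" "prime r" "ord x dvd r"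
  shows "ord x = r"
  using assms ord_eq_1[OF assms(1)] unfolding prime_nat_iff by blast

lemma int_pow_eq_if_cong_ord:
  assumes "x \<in> carrier G" "[i = j] (mod int (ord x))"
  shows "x [^] i = x [^] j"
  using assms by (simp add: int_pow_eq cong_iff_dvd_diff dvd_diff_commute)

lemma int_pow_inj_below_ord:
  assumes "x \<in> carrier G" "x [^] i = x [^] j" "0 \<le> i" "i < int (ord x)" "0 \<le> j" "j < int (ord x)"
  shows "i = j"
  using assms cong_less_imp_eq_int[of i "int (ord x)" j]
  by (simp add: int_pow_eq cong_iff_dvd_diff dvd_diff_commute)

lemma subgroup_eq_one_if_card_eq_1:
  assumes "subgroup H G" "card H = 1"
  shows "H = {\<one>}"
  using assms(2) subgroup.one_closed[OF assms(1)] by (auto simp: card_1_singleton_iff)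

lemma exists_ord_eq_prime:
  assumes fin: "finite (carrier G)" and r: "prime r" "r dvd order G"
  shows "\<exists>x\<in>carrier G. ord x = r"
proof -
  obtain m where "order G = r ^ 1 * m" using r(2) by auto
  then obtain H where H: "subgroup H G" "card H = r"
    using sylow_thm[OF r(1) is_group _ fin] by (metis power_one_right)
  have "H \<noteq> {\<one>}"
    using H(2) prime_gt_1_nat[OF r(1)] by auto
  then obtain x where x: "x \<in> H" "x \<noteq> \<one>"
    using subgroup.one_closed[OF H(1)] by blast
  have "x \<in> carrier G" using subgroup.mem_carrier[OF H(1) x(1)] .
  then show ?thesis
    using ord_eq_prime_if_dvd[OF _ x(2) r(1)] ord_dvd_card_subgroup[OF H(1) x(1)] H(2) by auto
qed

lemma inter_eq_one_if_coprime_card: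
  assumes H: "subgroup H G" and K: "subgroup K G" and cop: "coprime (card H) (card K)"
  shows "H \<inter> K = {\<one>}"
proof -
  have HK: "subgroup (H \<inter> K) G" using subgroups_Inter_pair[OF H K] .
  have "card (H \<inter> K) dvd card H" "card (H \<inter> K) dvd card K"
    using card_subgroup_dvd[OF H HK] card_subgroup_dvd[OF K HK] by auto
  then have "card (H \<inter> K) = 1"
    using cop coprime_common_divisor_nat by blast
  then show ?thesis using subgroup_eq_one_if_card_eq_1[OF HK] by simp
qed

lemma subgroups_prime_card_eq_or_inter_eq_one:
  assumes H: "subgroup H G" and K: "subgroup K G" and p: "prime p" "card H = p" "card K = p"
  shows "H = K \<or> H \<inter> K = {\<one>}"
proof -
  have HK: "subgroup (H \<inter> K) G" using subgroups_Inter_pair[OF H K] .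
  have fin: "finite H" "finite K"
    using p prime_gt_0_nat[OF p(1)] by (auto intro: card_ge_0_finite)
  have "card (H \<inter> K) dvd p" using card_subgroup_dvd[OF H HK] p by simp
  then consider "card (H \<inter> K) = 1" | "card (H \<inter> K) = p" using p(1) prime_nat_iff by auto
  then show ?thesis
  proof cases
    case 1
    then show ?thesis using subgroup_eq_one_if_card_eq_1[OF HK] by simp
  next
    case 2
    then have "H \<inter> K = H" "H \<inter> K = K"
      using card_subset_eq[OF fin(1), of "H \<inter> K"] card_subset_eq[OF fin(2), of "H \<inter> K"] p
      by auto
    then show ?thesis by simp
  qed
qed

lemma mult_eq_mult_imp_eq_if_inter_eq_one:
  assumes HK: "H \<inter> K = {\<one>}" and H: "subgroup H G" and K: "subgroup K G"
    and in_HK: "h \<in> H" "k \<in> K" "h' \<in> H" "k' \<in> K" and eq: "h \<otimes> k = h' \<otimes> k'"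
  shows "h = h' \<and> k = k'"
proof -
  have carr: "h \<in> carrier G" "k \<in> carrier G" "h' \<in> carrier G" "k' \<in> carrier G"
    using in_HK subgroup.mem_carrier[OF H] subgroup.mem_carrier[OF K] by auto
  have "inv h' \<otimes> h = inv h' \<otimes> (h \<otimes> k) \<otimes> inv k"
    using carr by (simp add: m_assoc)
  also have "\<dots> = k' \<otimes> inv k"
    using carr by (simp add: eq m_assoc[symmetric])
  finally have "inv h' \<otimes> h = k' \<otimes> inv k" .
  moreover have "inv h' \<otimes> h \<in> H" "k' \<otimes> inv k \<in> K"
    using in_HK H K by (auto intro: subgroup.m_closed subgroup.m_inv_closed)
  ultimately have "k' \<otimes> inv k \<in> H \<inter> K" by simp
  then have "\<one> = inv h' \<otimes> h" "\<one> = k' \<otimes> inv k"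
    using HK \<open>inv h' \<otimes> h = k' \<otimes> inv k\<close> by auto
  then show ?thesis
    using carr inv_solve_left[of \<one> h' h] inv_solve_right[of \<one> k' k] by simp
qed

lemma card_mult_le_order_if_inter_eq_one:
  assumes fin: "finite (carrier G)" and H: "subgroup H G" and K: "subgroup K G"
    and HK: "H \<inter> K = {\<one>}"
  shows "card H * card K \<le> order G"
proof -
  have "inj_on (\<lambda>(h, k). h \<otimes> k) (H \<times> K)"
    using mult_eq_mult_imp_eq_if_inter_eq_one[OF HK H K] by (intro inj_onI) auto
  moreover have "(\<lambda>(h, k). h \<otimes> k) ` (H \<times> K) \<subseteq> carrier G"
    using subgroup.mem_carrier[OF H] subgroup.mem_carrier[OF K] by auto
  ultimately show ?thesis
    using card_inj_on_le[OF _ _ fin] by (fastforce simp: card_cartesian_product order_def)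
qed

end

section \<open>Groups of order \<open>p\<^sup>2\<close> and subgroups of prime order\<close>

lemma (in group_action) orbit_eq_singleton_iff:
  assumes "x \<in> E"
  shows "orbit G \<phi> x = {x} \<longleftrightarrow> (\<forall>g\<in>carrier G. \<phi> g x = x)"
  using orbit_refl[OF assms] unfolding orbit_def by blast

lemma (in group_action) prime_dvd_card_orbit:
  assumes p: "prime p" and order: "order G = p ^ n" and x: "x \<in> E" "orbit G \<phi> x \<noteq> {x}"
  shows "p dvd card (orbit G \<phi> x)"
proof -
  have "card (orbit G \<phi> x) dvd p ^ n"
    unfolding order[symmetric] orbit_stabilizer_theorem[OF x(1), symmetric] by simp
  then obtain i where i: "card (orbit G \<phi> x) = p ^ i" using divides_primepow_nat[OF p] by blast
  have "i \<noteq> 0"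
  proof
    assume "i = 0"
    then have "card (orbit G \<phi> x) = 1" using i by simp
    then show False using orbit_refl[OF x(1)] x(2) by (auto simp: card_1_singleton_iff)
  qed
  then show ?thesis using i by simp
qed

lemma (in group_action) card_orbit_cong_fixed_points:
  assumes p: "prime p" and order: "order G = p ^ n" and x: "x \<in> E"
    and F: "F = {y \<in> E. \<forall>g\<in>carrier G. \<phi> g y = y}"
  shows "[card (orbit G \<phi> x) = (\<Sum>y\<in>orbit G \<phi> x. if y \<in> F then 1 else 0)] (mod p)"
proof (cases "orbit G \<phi> x = {x}")
  case True
  then have "x \<in> F" using x orbit_eq_singleton_iff[OF x] F by auto
  then show ?thesis using True by simp
next
  case False
  have "orbit G \<phi> x \<inter> F = {}"
  proof (rule ccontr)
    assume "orbit G \<phi> x \<inter> F \<noteq> {}"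
    then obtain y where y: "y \<in> orbit G \<phi> x" "y \<in> E" "orbit G \<phi> y = {y}"
      using orbit_eq_singleton_iff F by blast
    then show False using orbit_sym[OF x y(2,1)] orbit_trans False by simp
  qed
  then have "(\<Sum>y\<in>orbit G \<phi> x. if y \<in> F then 1 else 0) = (0::nat)"
    by (intro sum.neutral) auto
  then show ?thesis
    using prime_dvd_card_orbit[OF p order x False] by (simp add: cong_0_iff)
qed

lemma (in group_action) card_fixed_points_cong:
  assumes fin: "finite E" and p: "prime p" and order: "order G = p ^ n"
  shows "[card E = card {x \<in> E. \<forall>g\<in>carrier G. \<phi> g x = x}] (mod p)"
proof -
  define F where "F = {x \<in> E. \<forall>g\<in>carrier G. \<phi> g x = x}"
  have "[(\<Sum>orb\<in>orbits G E \<phi>. card orb) =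
      (\<Sum>orb\<in>orbits G E \<phi>. \<Sum>x\<in>orb. if x \<in> F then 1 else 0)] (mod p)"
    using card_orbit_cong_fixed_points[OF p order _ F_def]
    by (intro cong_sum) (auto simp: orbits_def)
  moreover have "(\<Sum>orb\<in>orbits G E \<phi>. card orb) = card E"
  proof -
    have "(\<Sum>orb\<in>orbits G E \<phi>. card orb) = (\<Sum>orb\<in>orbits G E \<phi>. \<Sum>x\<in>orb. 1)"
      by (rule sum.cong) simp_all
    then show ?thesis using disjoint_sum[OF fin, of "\<lambda>_. 1::nat"] by simp
  qed
  moreover have "(\<Sum>orb\<in>orbits G E \<phi>. \<Sum>x\<in>orb. if x \<in> F then 1 else 0) = card F"
  proof -
    have "(\<Sum>orb\<in>orbits G E \<phi>. \<Sum>x\<in>orb. if x \<in> F then 1 else 0) = (\<Sum>x\<in>E. if x \<in> F then 1 else 0)"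
      by (rule disjoint_sum[OF fin])
    also have "\<dots> = card F"
      by (rule card_as_sums[symmetric]) (auto simp: F_def fin)
    finally show ?thesis .
  qed
  ultimately show ?thesis unfolding F_def by simp
qed

lemma dvd_prime_square:
  fixes p d :: nat
  assumes "prime p" "d dvd p * p"
  shows "d = 1 \<or> d = p \<or> d = p * p"
proof -
  obtain i where "i \<le> 2" "d = p ^ i"
    using assms divides_primepow_nat[of p d 2] by (auto simp: power2_eq_square)
  then show ?thesis by (auto simp: le_Suc_eq numeral_2_eq_2)
qed

context group
begin

lemma centre_ne_one_if_prime_power:
  assumes fin: "finite (carrier G)" and p: "prime p" and order: "order G = p ^ n" and "n > 0"
  shows "centre G \<noteq> {\<one>}"
proof
  assume trivial_centre: "centre G = {\<one>}"
  interpret conj: group_action G "carrier G" "\<lambda>g. \<lambda>h\<in>carrier G. g \<otimes> h \<otimes> inv g"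
    by (rule action_by_conjugation)
  have "{x \<in> carrier G. \<forall>g\<in>carrier G. (\<lambda>h\<in>carrier G. g \<otimes> h \<otimes> inv g) x = x} = centre G"
    unfolding centre_def
    by (intro Collect_cong conj_cong refl ball_cong) (simp_all add: conjugate_eq_iff_commute)
  then have "[p ^ n = 1] (mod p)"
    using conj.card_fixed_points_cong[OF fin p order] trivial_centre order
    by (simp add: order_def)
  then show False
    using \<open>n > 0\<close> p by (simp add: cong_def prime_gt_1_nat)
qed

lemma comm_group_if_order_prime_square:
  assumes p: "prime p" and order: "order G = p * p"
  shows "comm_group G"
proof (rule ccontr)
  assume noncomm: "\<not> comm_group G"
  have fin: "finite (carrier G)"
    using order p by (intro card_ge_0_finite) (simp add: order_def prime_gt_0_nat)
  have Z: "subgroup (centre G) G" by (rule subgroup_centre)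
  obtain x where x: "x \<in> carrier G" "x \<notin> centre G"
    using noncomm comm_group_if_centre_eq_carrier subgroup.subset[OF Z] by blast
  have "card (centre G) \<noteq> 1"
    using centre_ne_one_if_prime_power[OF fin p, of 2] order subgroup_eq_one_if_card_eq_1[OF Z]
    by (auto simp: power2_eq_square)
  moreover have "card (centre G) \<noteq> p * p"
    using x subgroup_eq_carrier_if_card[OF fin Z] order by auto
  ultimately have card_Z: "card (centre G) = p"
    using dvd_prime_square[OF p] card_subgroup_dvd_order[OF Z] order by auto
  let ?C = "centralizer G x"
  have C: "subgroup ?C G" using subgroup_centralizer[OF x(1)] .
  have "centre G \<subset> ?C"
    using x by (auto simp: centre_def centralizer_def)
  then have "p < card ?C"
    using card_Z psubset_card_mono[OF finite_subset[OF subgroup.subset[OF C] fin] \<open>centre G \<subset> ?C\<close>]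
    by simp
  then have "card ?C = order G"
    using dvd_prime_square[OF p, of "card ?C"] card_subgroup_dvd_order[OF C] order
      prime_gt_0_nat[OF p] by auto
  then have "?C = carrier G" using subgroup_eq_carrier_if_card[OF fin C] by simp
  then show False using x mem_centre_iff_centralizer by blast
qed

lemma cyclic_if_prime_order:
  assumes "prime (order G)"
  shows "cyclic_group G"
proof -
  have fin: "finite (carrier G)"
    using assms by (intro card_ge_0_finite) (simp add: order_def prime_gt_0_nat)
  have "carrier G \<noteq> {\<one>}"
    using assms by (auto simp: order_def)
  then obtain x where x: "x \<in> carrier G" "x \<noteq> \<one>" by blast
  have "ord x = order G"
    using ord_eq_prime_if_dvd[OF x assms ord_dvd_group_order[OF x(1)]] .
  then have "generate G {x} = carrier G"
    using subgroup_eq_carrier_if_card[OF fin generate_is_subgroup] generate_pow_card[OF x(1)] x(1)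
    by simp
  then have "carrier G = range (\<lambda>n::int. x [^] n)"
    using generate_pow[OF x(1)] by (simp add: full_SetCompr_eq)
  then show ?thesis
    unfolding cyclic_group using x(1) by blast
qed

lemma metacyclic_if_normal_prime:
  assumes N: "N \<lhd> G" and "prime (card N)" "prime (card (rcosets N))"
  shows "metacyclic G"
proof -
  have "cyclic_group (G\<lparr>carrier := N\<rparr>)"
    using group.cyclic_if_prime_order[OF subgroup_imp_group[OF normal_imp_subgroup[OF N]]] assms(2)
    by (simp add: order_def)
  moreover have "cyclic_group (G Mod N)"
    using group.cyclic_if_prime_order[OF normal.factorgroup_is_group[OF N]] assms(3)
    by (simp add: order_def FactGroup_def)
  ultimately show ?thesis unfolding metacyclic_def using N by blast
qed

lemma normal_if_prime_card:
  assumes fin: "finite (carrier G)" and P: "subgroup P G" and p: "prime p" "card P = p"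
    and small: "order G < p * p"
  shows "P \<lhd> G"
  unfolding normal_inv_iff
proof (intro conjI P ballI)
  fix x h assume x: "x \<in> carrier G" and h: "h \<in> P"
  let ?Q = "(\<lambda>h. x \<otimes> h \<otimes> inv x) ` P"
  interpret conj: group_hom G G "\<lambda>h. x \<otimes> h \<otimes> inv x"
    using conjugation_hom[OF x] by (simp add: group_hom_def group_hom_axioms_def is_group)
  have Q: "subgroup ?Q G" using conj.subgroup_img_is_subgroup[OF P] .
  have "inj_on (\<lambda>h. x \<otimes> h \<otimes> inv x) P"
    using conjugation_is_inj[OF x] subgroup.mem_carrier[OF P] by (meson inj_onI)
  then have card_Q: "card ?Q = p" using card_image p(2) by metis
  have "P \<inter> ?Q \<noteq> {\<one>}"
  proof
    assume "P \<inter> ?Q = {\<one>}"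
    then have "card P * card ?Q \<le> order G"
      by (rule card_mult_le_order_if_inter_eq_one[OF fin P Q])
    then show False using card_Q p(2) small by simp
  qed
  then have "P = ?Q"
    using subgroups_prime_card_eq_or_inter_eq_one[OF P Q p(1) p(2) card_Q] by blast
  then show "x \<otimes> h \<otimes> inv x \<in> P" using h by blast
qed

lemma exists_conj_eq_pow_if_normal:
  assumes N: "generate G {a} \<lhd> G" and a: "a \<in> carrier G" "0 < ord a" and b: "b \<in> carrier G"
  shows "\<exists>k < ord a. inv b \<otimes> a \<otimes> b = a [^] k"
proof -
  have "a \<in> generate G {a}" by (simp add: generate.incl)
  then have "inv b \<otimes> a \<otimes> inv (inv b) \<in> generate G {a}"
    using N b unfolding normal_inv_iff by blast
  then obtain i :: int where i: "inv b \<otimes> a \<otimes> b = a [^] i"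
    using generate_pow[OF a(1)] b by auto
  define k where "k = nat (i mod int (ord a))"
  have "a [^] k = a [^] i"
    using int_pow_eq_if_cong_ord[OF a(1), of "int k" i] a(2)
    by (simp add: k_def cong_def int_pow_int[symmetric])
  moreover have "k < ord a" using a(2) by (simp add: k_def nat_less_iff)
  ultimately show ?thesis using i by auto
qed

end

section \<open>The groups \<open>G(m, n, k)\<close>\<close>

context group
begin

text \<open>Unlike \<open>iso_set_sym\<close>, this does not require \<open>H\<close> to be known to be a group.\<close>

lemma is_iso_if_bij_hom:
  assumes h: "h \<in> hom H G" "bij_betw h (carrier H) (carrier G)"
    and closed: "\<And>x y. x \<in> carrier H \<Longrightarrow> y \<in> carrier H \<Longrightarrow> x \<otimes>\<^bsub>H\<^esub> y \<in> carrier H"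
  shows "G \<cong> H"
proof -
  let ?h' = "inv_into (carrier H) h"
  have bij': "bij_betw ?h' (carrier G) (carrier H)" using bij_betw_inv_into[OF h(2)] .
  have "?h' \<in> hom G H"
  proof (rule homI)
    show "?h' x \<in> carrier H" if "x \<in> carrier G" for x
      using bij' that bij_betwE by blast
    fix x y assume x: "x \<in> carrier G" and y: "y \<in> carrier G"
    have inv_x: "?h' x \<in> carrier H" "h (?h' x) = x"
      using bij' x bij_betwE bij_betw_inv_into_right[OF h(2)] by blast+
    have inv_y: "?h' y \<in> carrier H" "h (?h' y) = y"
      using bij' y bij_betwE bij_betw_inv_into_right[OF h(2)] by blast+
    show "?h' (x \<otimes> y) = ?h' x \<otimes>\<^bsub>H\<^esub> ?h' y"
    proof (rule inv_into_f_eq)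
      show "inj_on h (carrier H)" using h(2) by (simp add: bij_betw_def)
      show "?h' x \<otimes>\<^bsub>H\<^esub> ?h' y \<in> carrier H" using closed inv_x inv_y by blast
      show "h (?h' x \<otimes>\<^bsub>H\<^esub> ?h' y) = x \<otimes> y"
        using hom_mult[OF h(1) inv_x(1) inv_y(1)] inv_x inv_y by simp
    qed
  qed
  then show ?thesis using bij' unfolding is_iso_def iso_def by blast
qed

end

lemma Gmnk_mult_closed:
  assumes "0 < m" "0 < n" "x \<in> carrier (Gmnk m n k)" "y \<in> carrier (Gmnk m n k)"
  shows "x \<otimes>\<^bsub>Gmnk m n k\<^esub> y \<in> carrier (Gmnk m n k)"
  using assms by (auto simp: Gmnk_def split: prod.splits)

lemma card_carrier_Gmnk: "card (carrier (Gmnk m n k)) = m * n"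
  by (simp add: Gmnk_def card_cartesian_product)

locale Gmnk_relations = group G for G (structure) +
  fixes a b :: 'a and m n k :: nat
  assumes a_closed: "a \<in> carrier G" and b_closed: "b \<in> carrier G"
    and ord_a: "ord a = m" and ord_b: "ord b = n"
    and conj_b_a: "inv b \<otimes> a \<otimes> b = a [^] k"
begin

lemma conj_b_pow_a_pow: "inv (b [^] (e::nat)) \<otimes> a [^] (x::int) \<otimes> b [^] e = a [^] (x * int k ^ e)"
proof (induction e arbitrary: x)
  case 0
  then show ?case using a_closed by simp
next
  case (Suc e)
  interpret conj: group_hom G G "\<lambda>g. inv b \<otimes> g \<otimes> b"
    using conjugation_hom[of "inv b"] b_closed
    by (simp add: group_hom_def group_hom_axioms_def is_group)
  have "inv (b [^] Suc e) \<otimes> a [^] x \<otimes> b [^] Suc e = inv b \<otimes> (inv (b [^] e) \<otimes> a [^] x \<otimes> b [^] e) \<otimes> b"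
    using a_closed b_closed by (simp add: nat_pow_Suc2 inv_mult_group m_assoc)
  also have "\<dots> = inv b \<otimes> a [^] (x * int k ^ e) \<otimes> b" by (simp only: Suc.IH)
  also have "\<dots> = (inv b \<otimes> a \<otimes> b) [^] (x * int k ^ e)" using conj.hom_int_pow a_closed by simp
  also have "\<dots> = a [^] (x * int k ^ Suc e)"
    using a_closed by (simp add: conj_b_a int_pow_int[symmetric] int_pow_pow mult_ac)
  finally show ?case .
qed

lemma a_pow_b_pow: "a [^] (x::int) \<otimes> b [^] (e::nat) = b [^] e \<otimes> a [^] (x * int k ^ e)"
proof -
  have "a [^] x \<otimes> b [^] e = b [^] e \<otimes> (inv (b [^] e) \<otimes> a [^] x \<otimes> b [^] e)"
    using a_closed b_closed by (simp add: m_assoc[symmetric])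
  then show ?thesis by (simp only: conj_b_pow_a_pow)
qed

lemma k_pow_ord_b_cong: "[k ^ n = 1] (mod m)"
proof -
  have "b [^] n = \<one>" using pow_ord_eq_1[OF b_closed] ord_b by simp
  then have "a [^] (1::int) = a [^] (int k ^ n)"
    using conj_b_pow_a_pow[of n 1] a_closed by simp
  then have "int m dvd int k ^ n - 1"
    using int_pow_eq[OF a_closed, of 1 "int k ^ n"] ord_a by simp
  then have "[int (k ^ n) = int 1] (mod int m)"
    by (simp add: cong_iff_dvd_diff)
  then show ?thesis by (simp only: cong_int_iff)
qed

lemma b_pow_a_pow:
  assumes "0 \<le> j" "j \<le> int n"
  shows "b [^] j \<otimes> a [^] s = a [^] (s * int k ^ nat (int n - j)) \<otimes> b [^] j"
proof -
  obtain e where j: "j = int e" "e \<le> n" using assms zero_le_imp_eq_int by force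
  have "[int (k ^ n) = int 1] (mod int m)"
    using k_pow_ord_b_cong by (simp only: cong_int_iff)
  then have "[s * int k ^ n = s * 1] (mod int m)"
    by (intro cong_mult cong_refl) simp
  then have "a [^] (s * int k ^ (n - e) * int k ^ e) = a [^] s"
    using int_pow_eq_if_cong_ord[OF a_closed] j(2) ord_a by (simp add: mult.assoc power_add[symmetric])
  then show ?thesis
    using a_pow_b_pow[of "s * int k ^ (n - e)" e] j by (simp add: int_pow_int nat_diff_distrib)
qed

definition ab_pow :: "int \<times> int \<Rightarrow> 'a" where
  "ab_pow = (\<lambda>(i, j). a [^] i \<otimes> b [^] j)"

lemma ab_pow_hom: "ab_pow \<in> hom (Gmnk m n k) G"
proof (rule homI)
  show "ab_pow u \<in> carrier G" for u
    using a_closed b_closed by (auto simp: ab_pow_def split: prod.splits)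
  fix u v assume u: "u \<in> carrier (Gmnk m n k)" and v: "v \<in> carrier (Gmnk m n k)"
  obtain i j s t where uv: "u = (i, j)" "v = (s, t)" by (cases u, cases v)
  have j: "0 \<le> j" "j \<le> int n" using u uv by (auto simp: Gmnk_def)
  define K where "K = int k ^ nat (int n - j)"
  have "ab_pow (u \<otimes>\<^bsub>Gmnk m n k\<^esub> v) = a [^] ((i + s * K) mod int m) \<otimes> b [^] ((j + t) mod int n)"
    by (simp add: Gmnk_def uv ab_pow_def K_def)
  also have "\<dots> = a [^] (i + s * K) \<otimes> b [^] (j + t)"
    using int_pow_eq_if_cong_ord[OF a_closed, of "(i + s * K) mod int m" "i + s * K"]
      int_pow_eq_if_cong_ord[OF b_closed, of "(j + t) mod int n" "j + t"] ord_a ord_b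
    by (simp add: cong_def)
  also have "\<dots> = a [^] i \<otimes> (a [^] (s * K) \<otimes> b [^] j) \<otimes> b [^] t"
    using a_closed b_closed by (simp add: int_pow_mult m_assoc)
  also have "\<dots> = a [^] i \<otimes> (b [^] j \<otimes> a [^] s) \<otimes> b [^] t"
    using b_pow_a_pow[OF j] by (simp add: K_def)
  also have "\<dots> = ab_pow u \<otimes> ab_pow v"
    using a_closed b_closed by (simp add: uv ab_pow_def m_assoc)
  finally show "ab_pow (u \<otimes>\<^bsub>Gmnk m n k\<^esub> v) = ab_pow u \<otimes> ab_pow v" .
qed

lemma ab_pow_inj:
  assumes trivial: "generate G {a} \<inter> generate G {b} = {\<one>}"
  shows "inj_on ab_pow (carrier (Gmnk m n k))"
proof (rule inj_onI, clarify)
  fix i j s t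
  assume ij: "(i, j) \<in> carrier (Gmnk m n k)" and st: "(s, t) \<in> carrier (Gmnk m n k)"
    and eq: "ab_pow (i, j) = ab_pow (s, t)"
  have A: "subgroup (generate G {a}) G" and B: "subgroup (generate G {b}) G"
    using a_closed b_closed generate_is_subgroup by auto
  have "a [^] x \<in> generate G {a}" "b [^] x \<in> generate G {b}" for x :: int
    using generate_pow a_closed b_closed by auto
  then have "a [^] i = a [^] s \<and> b [^] j = b [^] t"
    using mult_eq_mult_imp_eq_if_inter_eq_one[OF trivial A B, of "a [^] i" "b [^] j" "a [^] s" "b [^] t"]
      eq by (simp add: ab_pow_def)
  moreover have "0 \<le> i" "i < int m" "0 \<le> s" "s < int m" "0 \<le> j" "j < int n" "0 \<le> t" "t < int n"
    using ij st by (auto simp: Gmnk_def)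
  ultimately show "i = s \<and> j = t"
    using int_pow_inj_below_ord[OF a_closed, of i s] int_pow_inj_below_ord[OF b_closed, of j t]
      ord_a ord_b by simp
qed

lemma iso_Gmnk:
  assumes fin: "finite (carrier G)" and order: "order G = m * n"
    and trivial: "generate G {a} \<inter> generate G {b} = {\<one>}"
  shows "G \<cong> Gmnk m n k"
proof (rule is_iso_if_bij_hom[OF ab_pow_hom])
  have "0 < order G" using fin order_gt_0_iff_finite by blast
  then have "0 < m" "0 < n" using order by auto
  then show "x \<otimes>\<^bsub>Gmnk m n k\<^esub> y \<in> carrier (Gmnk m n k)"
    if "x \<in> carrier (Gmnk m n k)" "y \<in> carrier (Gmnk m n k)" for x y
    using Gmnk_mult_closed that by simp
  have "ab_pow ` carrier (Gmnk m n k) \<subseteq> carrier G"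
    using ab_pow_hom by (auto simp: hom_def)
  moreover have "card (ab_pow ` carrier (Gmnk m n k)) = card (carrier G)"
    using card_image[OF ab_pow_inj[OF trivial]] card_carrier_Gmnk order by (simp add: order_def)
  ultimately have "ab_pow ` carrier (Gmnk m n k) = carrier G"
    using card_subset_eq[OF fin] by blast
  then show "bij_betw ab_pow (carrier (Gmnk m n k)) (carrier G)"
    using ab_pow_inj[OF trivial] by (simp add: bij_betw_def)
qed

end

section \<open>Groups of order \<open>pq\<close>\<close>

locale pq_group = group G for G (structure) +
  fixes p q :: nat
  assumes prime_p: "prime p" and prime_q: "prime q" and p_ne_q: "p \<noteq> q"
    and order_eq: "order G = p * q"
begin

lemma finite_carrier: "finite (carrier G)"
  using order_eq prime_p prime_q by (intro card_ge_0_finite) (simp add: order_def prime_gt_0_nat)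

lemma pq_group_swap: "pq_group G q p"
  using prime_p prime_q p_ne_q order_eq
  by (intro pq_group.intro is_group pq_group_axioms.intro) (simp_all add: mult.commute)

lemma subgroup_eq_carrier_if_dvd:
  assumes H: "subgroup H G" and "p dvd card H" "q dvd card H"
  shows "H = carrier G"
proof -
  have "p * q dvd card H"
    using assms(2,3) primes_coprime[OF prime_p prime_q p_ne_q] by (rule divides_mult)
  then have "card H = order G"
    using card_subgroup_dvd_order[OF H] order_eq by (simp add: dvd_antisym)
  then show ?thesis using subgroup_eq_carrier_if_card[OF finite_carrier H] by simp
qed

lemma mem_centre_if_commutes:
  assumes x: "x \<in> carrier G" and a: "a \<in> carrier G" "ord a = p" and b: "b \<in> carrier G" "ord b = q"
    and commute: "x \<otimes> a = a \<otimes> x" "x \<otimes> b = b \<otimes> x"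
  shows "x \<in> centre G"
proof -
  have C: "subgroup (centralizer G x) G" using subgroup_centralizer[OF x] .
  have "a \<in> centralizer G x" "b \<in> centralizer G x"
    using a b commute by (simp_all add: centralizer_def)
  then have "centralizer G x = carrier G"
    using subgroup_eq_carrier_if_dvd[OF C] ord_dvd_card_subgroup[OF C] a(2) b(2) by metis
  then show ?thesis using x mem_centre_iff_centralizer by blast
qed

lemma comm_group_if_commuting_pair:
  assumes a: "a \<in> carrier G" "ord a = p" and b: "b \<in> carrier G" "ord b = q"
    and ab: "a \<otimes> b = b \<otimes> a"
  shows "comm_group G"
proof -
  have "a \<in> centre G" "b \<in> centre G"
    using mem_centre_if_commutes[OF a(1) a b] mem_centre_if_commutes[OF b(1) a b] ab by simp_all
  then have "x \<in> centre G" if "x \<in> carrier G" for x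
    using mem_centre_if_commutes[OF that a b] that unfolding centre_def by simp
  then have "centre G = carrier G" unfolding centre_def by blast
  then show ?thesis by (rule comm_group_if_centre_eq_carrier)
qed

lemma not_dvd_ord_if_central:
  assumes noncomm: "\<not> comm_group G" and z: "z \<in> centre G"
  shows "\<not> p dvd ord z"
proof
  assume "p dvd ord z"
  then obtain d where d: "ord z = p * d" by blast
  have zc: "z \<in> carrier G" using z by (simp add: centre_def)
  have "d > 0" using d ord_ge_1[OF finite_carrier zc] by (cases d) auto
  let ?w = "z [^] d"
  have w: "?w \<in> carrier G" "ord ?w = p"
    using zc ord_pow_gen[OF zc, of d] d \<open>d > 0\<close> prime_gt_0_nat[OF prime_p] by simp_all
  have "?w \<in> centre G"
    using subgroup_int_pow_closed[OF subgroup_centre z, of "int d"] by (simp add: int_pow_int)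
  obtain b where b: "b \<in> carrier G" "ord b = q"
    using exists_ord_eq_prime[OF finite_carrier prime_q] order_eq by auto
  have "?w \<otimes> b = b \<otimes> ?w" using \<open>?w \<in> centre G\<close> b(1) by (simp add: centre_def)
  then show False using comm_group_if_commuting_pair[OF w b] noncomm by blast
qed

lemma centre_eq_one_if_noncomm:
  assumes noncomm: "\<not> comm_group G"
  shows "centre G = {\<one>}"
proof (rule ccontr)
  assume "centre G \<noteq> {\<one>}"
  then obtain z where z: "z \<in> centre G" "z \<noteq> \<one>"
    using subgroup.one_closed[OF subgroup_centre] by blast
  have zc: "z \<in> carrier G" using z by (simp add: centre_def)
  have "ord z \<noteq> 1" using ord_eq_1[OF zc] z(2) by simp
  then obtain r where r: "prime r" "r dvd ord z" using prime_factor_nat by blast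
  then have "r dvd p * q" using ord_dvd_group_order[OF zc] order_eq by (metis dvd_trans)
  then have "r = p \<or> r = q"
    using r(1) prime_p prime_q by (auto simp: prime_dvd_mult_iff primes_dvd_imp_eq)
  then show False
    using not_dvd_ord_if_central[OF noncomm z(1)]
      pq_group.not_dvd_ord_if_central[OF pq_group_swap noncomm z(1)] r(2) by blast
qed

lemma normal_if_ord_eq_p:
  assumes "q < p" and a: "a \<in> carrier G" "ord a = p"
  shows "generate G {a} \<lhd> G"
proof (rule normal_if_prime_card[OF finite_carrier generate_is_subgroup prime_p])
  show "card (generate G {a}) = p" using generate_pow_card[OF a(1)] a(2) by simp
  show "order G < p * p" using order_eq \<open>q < p\<close> prime_gt_0_nat[OF prime_p] by simp
qed (use a in simp)

lemma metacyclic_if_less: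
  assumes "q < p"
  shows "metacyclic G"
proof -
  obtain a where a: "a \<in> carrier G" "ord a = p"
    using exists_ord_eq_prime[OF finite_carrier prime_p] order_eq by auto
  let ?A = "generate G {a}"
  have "card ?A = p" using generate_pow_card[OF a(1)] a(2) by simp
  moreover from this have "card (rcosets ?A) = q"
    using lagrange[OF generate_is_subgroup, of "{a}"] a(1) order_eq prime_gt_0_nat[OF prime_p]
    by simp
  ultimately show ?thesis
    using metacyclic_if_normal_prime[OF normal_if_ord_eq_p[OF assms a]] prime_p prime_q by simp
qed

lemma Gmnk_presentation:
  assumes "q < p" and noncomm: "\<not> comm_group G"
  shows "\<exists>k. Gmnk_params p q k \<and> G \<cong> Gmnk p q k"
proof -
  obtain a where a: "a \<in> carrier G" "ord a = p"
    using exists_ord_eq_prime[OF finite_carrier prime_p] order_eq by auto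
  obtain b where b: "b \<in> carrier G" "ord b = q"
    using exists_ord_eq_prime[OF finite_carrier prime_q] order_eq by auto
  obtain k where k: "k < p" "inv b \<otimes> a \<otimes> b = a [^] k"
    using exists_conj_eq_pow_if_normal[OF normal_if_ord_eq_p[OF assms(1) a] a(1) _ b(1)] a(2)
      prime_gt_0_nat[OF prime_p] by auto
  interpret Gmnk_relations G a b p q k
    using a b k(2) by unfold_locales
  have "k \<noteq> 1"
  proof
    assume "k = 1"
    have "a \<otimes> b = b \<otimes> (inv b \<otimes> a \<otimes> b)" using a(1) b(1) by (simp add: m_assoc[symmetric])
    also have "\<dots> = b \<otimes> a" using conj_b_a \<open>k = 1\<close> a(1) by simp
    finally show False using comm_group_if_commuting_pair[OF a b] noncomm by blast
  qed
  then have "Gmnk_params p q k"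
    using Gmnk_params_if_prime[OF prime_p prime_q k(1)] k_pow_ord_b_cong by simp
  moreover have "generate G {a} \<inter> generate G {b} = {\<one>}"
    using inter_eq_one_if_coprime_card[OF generate_is_subgroup generate_is_subgroup] a b
      generate_pow_card primes_coprime[OF prime_p prime_q p_ne_q] by simp
  then have "G \<cong> Gmnk p q k" using iso_Gmnk[OF finite_carrier order_eq] by simp
  ultimately show ?thesis by blast
qed

lemma nonabelian_classification:
  assumes "q < p" and noncomm: "\<not> comm_group G"
  shows "metacyclic G \<and> centre G = {\<one>} \<and>
    (\<exists>m n k. Gmnk_params m n k \<and> G \<cong> Gmnk m n k \<and>
       Sigma_complete m n k (Rset m n k) \<and> Sigma_complete m n k (Lset m n k))"
  using metacyclic_if_less[OF assms(1)] centre_eq_one_if_noncomm[OF noncomm]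
    Gmnk_presentation[OF assms] Sigma_complete_Rset Sigma_complete_Lset prime_p by blast

end

theorem theorem6p6:
  fixes G :: "('a, 'b) monoid_scheme" and p q :: nat
  assumes "group G"
    and "Factorial_Ring.prime p" and "Factorial_Ring.prime q"
    and "order G = p * q"
    and "\<not> comm_group G"
  shows "metacyclic G \<and> centre G = {\<one>\<^bsub>G\<^esub>} \<and>
         (\<exists>m n k. Gmnk_params m n k \<and> G \<cong> Gmnk m n k \<and>
                  Sigma_complete m n k (Rset m n k) \<and> Sigma_complete m n k (Lset m n k))"
proof -
  have "p \<noteq> q"
    using group.comm_group_if_order_prime_square[OF assms(1,2)] assms(4,5) by auto
  then consider "q < p" | "p < q" by linarith
  then show ?thesis
  proof cases
    case 1
    interpret pq_group G p q
      using assms \<open>p \<noteq> q\<close> by (intro pq_group.intro pq_group_axioms.intro) simp_all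
    show ?thesis using nonabelian_classification[OF 1 assms(5)] .
  next
    case 2
    interpret pq_group G q p
      using assms \<open>p \<noteq> q\<close> by (intro pq_group.intro pq_group_axioms.intro) (simp_all add: mult.commute)
    show ?thesis using nonabelian_classification[OF 2 assms(5)] .
  qed
qed

end
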